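(* Let $A$ be a graded Frobenius algebra of Gorenstein parameter $-\ell$. For $0\le i,j\le\ell$, the map $A_{j-i}\to\mathrm{Hom}_{A^o}(A_{\ge i}(i),A_{\ge j}(j))$, $a\mapsto(\,\cdot\,a)$ (right multiplication by $a$), is an isomorphism.
   Context: Graded algebras are $\mathbb{N}$-graded algebras over an algebraically closed field $k$; $A_m=0$ for $m<0$. $M(n)_m=M_{n+m}$, $A_{\ge i}=\bigoplus_{m\ge i}A_m$, $D(M)=\bigoplus_m\mathrm{Hom}_k(M_{-m},k)$. $A$ is graded Frobenius of Gorenstein parameter $-\ell$ if it is locally finite and $D(A)\cong A(\ell)$ as graded right $A$-modules. $\mathrm{Hom}_{A^o}$ denotes degree-preserving homomorphisms of graded left $A$-modules. *)

theory Defs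
  imports Main "HOL-Computational_Algebra.Polynomial"
begin

definition alg_closed :: "'k::field itself \<Rightarrow> bool" where
  "alg_closed _ \<longleftrightarrow> (\<forall>p :: 'k poly. degree p > 0 \<longrightarrow> (\<exists>x. poly p x = 0))"

definition k_algebra :: "('k::field \<Rightarrow> 'a::ring_1 \<Rightarrow> 'a) \<Rightarrow> bool" where
  "k_algebra scale \<longleftrightarrow> vector_space scale \<and>
     (\<forall>c x y. scale c (x * y) = scale c x * y \<and> scale c (x * y) = x * scale c y)"

definition hom_family :: "(int \<Rightarrow> 'a::ring_1 set) \<Rightarrow> (int \<Rightarrow> 'a) \<Rightarrow> bool" where
  "hom_family G c \<longleftrightarrow> finite {m. c m \<noteq> 0} \<and> (\<forall>m. c m \<in> G m)"

definition graded_algebra ::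
  "('k::field \<Rightarrow> 'a::ring_1 \<Rightarrow> 'a) \<Rightarrow> (int \<Rightarrow> 'a set) \<Rightarrow> bool" where
  "graded_algebra scale G \<longleftrightarrow> k_algebra scale \<and>
     (\<forall>m. module.subspace scale (G m)) \<and>
     (\<forall>m. m < 0 \<longrightarrow> G m = {0}) \<and>
     (\<forall>x. \<exists>!c. hom_family G c \<and> x = (\<Sum>m\<in>{m. c m \<noteq> 0}. c m)) \<and>
     (\<forall>m n x y. x \<in> G m \<longrightarrow> y \<in> G n \<longrightarrow> x * y \<in> G (m + n)) \<and>
     1 \<in> G 0"

definition locally_finite ::
  "('k::field \<Rightarrow> 'a::ring_1 \<Rightarrow> 'a) \<Rightarrow> (int \<Rightarrow> 'a set) \<Rightarrow> bool" where
  "locally_finite scale G \<longleftrightarrow>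
     (\<forall>m. \<exists>B. finite B \<and> B \<subseteq> G m \<and> module.span scale B = G m)"

definition kdual :: "('k::field \<Rightarrow> 'a::ring_1 \<Rightarrow> 'a) \<Rightarrow> 'a set \<Rightarrow> ('a \<Rightarrow> 'k) set" where
  "kdual scale V = {\<phi>. (\<forall>x\<in>V. \<forall>y\<in>V. \<phi> (x + y) = \<phi> x + \<phi> y) \<and>
                       (\<forall>c. \<forall>x\<in>V. \<phi> (scale c x) = c * \<phi> x) \<and>
                       (\<forall>x. x \<notin> V \<longrightarrow> \<phi> x = 0)}"

text \<open>Graded Frobenius of Gorenstein parameter -l: locally finite, and
  D(A) \<cong> A(l) as graded right A-modules.  Degreewise, A(l)_m = G (l + m) and
  D(A)_m = Hom_k(G (-m), k); the right A-action on D(A) is (\<phi> a)(x) = \<phi> (a x).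
  A graded isomorphism is a family of bijections theta m : A(l)_m \<rightarrow> D(A)_m which is
  additive, k-linear and compatible with the right A-action.\<close>
definition graded_frobenius ::
  "('k::field \<Rightarrow> 'a::ring_1 \<Rightarrow> 'a) \<Rightarrow> (int \<Rightarrow> 'a set) \<Rightarrow> int \<Rightarrow> bool" where
  "graded_frobenius scale G l \<longleftrightarrow> graded_algebra scale G \<and> locally_finite scale G \<and>
     (\<exists>\<theta> :: int \<Rightarrow> 'a \<Rightarrow> ('a \<Rightarrow> 'k).
        (\<forall>m. bij_betw (\<theta> m) (G (l + m)) (kdual scale (G (- m)))) \<and>
        (\<forall>m. \<forall>b\<in>G (l + m). \<forall>b'\<in>G (l + m). \<theta> m (b + b') = (\<lambda>x. \<theta> m b x + \<theta> m b' x)) \<and>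
        (\<forall>m c. \<forall>b\<in>G (l + m). \<theta> m (scale c b) = (\<lambda>x. c * \<theta> m b x)) \<and>
        (\<forall>m n. \<forall>b\<in>G (l + m). \<forall>a\<in>G n.
            \<theta> (m + n) (b * a) = (\<lambda>x. if x \<in> G (- (m + n)) then \<theta> m b (a * x) else 0)))"

definition A_ge :: "(int \<Rightarrow> 'a::ring_1 set) \<Rightarrow> int \<Rightarrow> 'a set" where
  "A_ge G i = {x. \<exists>c. hom_family G c \<and> (\<forall>m. m < i \<longrightarrow> c m = 0) \<and>
                      x = (\<Sum>m\<in>{m. c m \<noteq> 0}. c m)}"

text \<open>Hom_{A^o}(A_{\<ge> i}(i), A_{\<ge> j}(j)): degree preserving homomorphisms of graded
  left A-modules.  The m-th component of A_{\<ge> i}(i) is G (i + m) (m \<ge> 0).  Maps are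
  represented as functions on the carrier A_{\<ge> i}, extended by 0 outside.\<close>
definition graded_left_hom ::
  "('k::field \<Rightarrow> 'a::ring_1 \<Rightarrow> 'a) \<Rightarrow> (int \<Rightarrow> 'a set) \<Rightarrow> int \<Rightarrow> int \<Rightarrow> ('a \<Rightarrow> 'a) set" where
  "graded_left_hom scale G i j = {f.
     (\<forall>x\<in>A_ge G i. f x \<in> A_ge G j) \<and>
     (\<forall>x\<in>A_ge G i. \<forall>y\<in>A_ge G i. f (x + y) = f x + f y) \<and>
     (\<forall>c. \<forall>x\<in>A_ge G i. f (scale c x) = scale c (f x)) \<and>
     (\<forall>b. \<forall>x\<in>A_ge G i. f (b * x) = b * f x) \<and>
     (\<forall>m. \<forall>x\<in>A_ge G i. x \<in> G (i + m) \<longrightarrow> f x \<in> G (j + m)) \<and>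
     (\<forall>x. x \<notin> A_ge G i \<longrightarrow> f x = 0)}"

definition rmult :: "(int \<Rightarrow> 'a::ring_1 set) \<Rightarrow> int \<Rightarrow> 'a \<Rightarrow> 'a \<Rightarrow> 'a" where
  "rmult G i a = (\<lambda>x. if x \<in> A_ge G i then x * a else 0)"

end

theory Submission
  imports Defs
begin

text \<open>The Frobenius form \<phi> = \<theta>_{-l}(1) on A_l turns \<theta>_{e-l}(w) into the functional
  x \<mapsto> \<phi>(w x), so surjectivity of \<theta> makes the pairing (z, w) \<mapsto> \<phi>(z w) on
  A_{l-e} \<times> A_e nondegenerate in w.  Since A_{l-(j-i)} \<subseteq> A_{\<ge>i} when j \<le> l, right
  multiplication by a \<in> A_{j-i} is determined by its restriction there, which gives
  injectivity.  Conversely, for a homomorphism f the functional y \<mapsto> \<phi>(f y) on A_{l-(j-i)}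
  has the form y \<mapsto> \<phi>(y a): the map a \<mapsto> \<phi>(\<cdot> a) is injective, and composed with \<theta>^{-1} it
  becomes an injective, hence bijective, endomorphism of the finite dimensional space
  A_{j-i}.  Nondegeneracy and left linearity of f then give f h = h a for every
  homogeneous h of degree \<ge> i.\<close>

lemma exists_kdual_nonzero:
  fixes scale :: "'k::field \<Rightarrow> 'a::ring_1 \<Rightarrow> 'a"
  assumes "vector_space scale" "module.subspace scale V" "w \<in> V" "w \<noteq> 0"
  shows "\<exists>\<psi>\<in>kdual scale V. \<psi> w \<noteq> 0"
proof -
  interpret vector_space scale by fact
  obtain B where B: "{w} \<subseteq> B" "B \<subseteq> V" "independent B" "V \<subseteq> span B"
    using maximal_independent_subset_extend[of "{w}" V] assms by auto
  have span_B: "span B = V" using B assms(2) span_minimal by blast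
  define \<psi> where "\<psi> v = (if v \<in> V then representation B v w else 0)" for v
  have "\<psi> \<in> kdual scale V"
    using assms(2) B(3) span_B
    by (simp add: kdual_def \<psi>_def representation_add representation_scale subspace_add subspace_scale)
  moreover have "\<psi> w \<noteq> 0"
    using representation_basis[OF B(3)] B(1) assms by (auto simp: \<psi>_def)
  ultimately show ?thesis by blast
qed

context vector_space begin

lemma linear_eq_restricted_linear_on_span:
  assumes "subspace V" "B \<subseteq> V" "Vector_Spaces.linear scale scale L"
    and S_add: "\<forall>x\<in>V. \<forall>y\<in>V. S (x + y) = S x + S y"
    and S_scale: "\<forall>c. \<forall>x\<in>V. S (c *s x) = c *s S x"
    and "\<forall>b\<in>B. L b = S b" "x \<in> span B"
  shows "L x = S x"
proof -
  interpret L: Vector_Spaces.linear scale scale L by fact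
  have S0: "S 0 = 0" using S_add subspace_0[OF assms(1)] by (metis add_cancel_right_right)
  have "subspace {x. x \<in> V \<and> L x = S x}"
    using assms(1) S_add S_scale S0
    by (auto simp: subspace_def L.add L.scale L.zero)
  then show ?thesis using span_induct[OF assms(7)] assms(2,6) by blast
qed

lemma inj_on_endomorphism_imp_surj_on:
  assumes "finite B" "span B = V"
    and S_add: "\<forall>x\<in>V. \<forall>y\<in>V. S (x + y) = S x + S y"
    and S_scale: "\<forall>c. \<forall>x\<in>V. S (c *s x) = c *s S x"
    and S_into: "S ` V \<subseteq> V" and S_inj: "inj_on S V"
  shows "S ` V = V"
proof -
  have V: "subspace V" using assms(2) subspace_span by blast
  obtain C where C: "C \<subseteq> V" "independent C" "V \<subseteq> span C"
    by (rule maximal_independent_subset)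
  have span_C: "span C = V" using C V span_minimal by blast
  have finite_C: "finite C"
    using independent_span_bound[OF assms(1) C(2)] C(1) assms(2) span_superset by blast
  interpret vector_space_pair scale scale ..
  define L where "L = construct C S"
  interpret L: Vector_Spaces.linear scale scale L
    unfolding L_def using linear_construct[OF C(2)] .
  have L_eq_S: "L x = S x" if "x \<in> V" for x
    using linear_eq_restricted_linear_on_span[OF V C(1) L.linear_axioms S_add S_scale]
      construct_basis[OF C(2)] that
    unfolding L_def span_C by blast
  have inj_L: "inj_on L (span C)"
    using S_inj L_eq_S unfolding span_C inj_on_def by simp
  have indep_LC: "independent (L ` C)"
    using L.independent_injective_image[OF C(2) inj_L] .
  have card_LC: "card (L ` C) = card C"
    using card_image[OF inj_on_subset[OF inj_L span_superset]] .
  have "V \<subseteq> span (L ` C)"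
  proof
    fix v assume v: "v \<in> V"
    show "v \<in> span (L ` C)"
    proof (rule ccontr)
      assume v_out: "v \<notin> span (L ` C)"
      have "L ` C \<subseteq> V" using C(1) L_eq_S S_into by auto
      then have "card (insert v (L ` C)) \<le> card C"
        using independent_span_bound[OF finite_C independent_insertI[OF v_out indep_LC]] v span_C
        by blast
      moreover have "v \<notin> L ` C" using v_out span_superset by blast
      ultimately show False using card_LC finite_C by simp
    qed
  qed
  moreover have "span (L ` C) = S ` V"
    using L.span_image L_eq_S span_C by auto
  ultimately show ?thesis using S_into by blast
qed

end

locale graded_k_algebra =
  fixes scale :: "'k::field \<Rightarrow> 'a::ring_1 \<Rightarrow> 'a" and G :: "int \<Rightarrow> 'a set"
  assumes graded_algebra: "graded_algebra scale G"
begin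

sublocale vector_space scale
  using graded_algebra unfolding graded_algebra_def k_algebra_def by blast

lemma scale_mult_left: "scale c (x * y) = scale c x * y"
  and scale_mult_right: "scale c (x * y) = x * scale c y"
  using graded_algebra unfolding graded_algebra_def k_algebra_def by simp_all metis

lemma subspace_G: "subspace (G m)"
  and mult_in_G: "x \<in> G m \<Longrightarrow> y \<in> G n \<Longrightarrow> x * y \<in> G (m + n)"
  and one_in_G: "1 \<in> G 0"
  and G_negative: "m < 0 \<Longrightarrow> G m = {0}"
  using graded_algebra unfolding graded_algebra_def by simp_all

lemma zero_in_G: "0 \<in> G m"
  and add_in_G: "x \<in> G m \<Longrightarrow> y \<in> G m \<Longrightarrow> x + y \<in> G m"
  and diff_in_G: "x \<in> G m \<Longrightarrow> y \<in> G m \<Longrightarrow> x - y \<in> G m"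
  and scale_in_G: "x \<in> G m \<Longrightarrow> scale c x \<in> G m"
  by (simp_all add: subspace_0 subspace_add subspace_diff subspace_scale subspace_G)

lemma A_geI:
  assumes "finite F" "\<forall>m\<in>F. g m \<in> G m \<and> i \<le> m"
  shows "(\<Sum>m\<in>F. g m) \<in> A_ge G i"
proof -
  define c where "c n = (if n \<in> F then g n else 0)" for n
  have supp: "{n. c n \<noteq> 0} \<subseteq> F" by (auto simp: c_def)
  have "hom_family G c"
    unfolding hom_family_def using finite_subset[OF supp assms(1)] assms(2) zero_in_G
    by (simp add: c_def)
  moreover have "\<forall>m. m < i \<longrightarrow> c m = 0" using assms(2) by (force simp: c_def)
  moreover have "(\<Sum>m\<in>F. g m) = (\<Sum>m\<in>{m. c m \<noteq> 0}. c m)"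
    by (subst sum.mono_neutral_left[OF assms(1) supp]) (auto simp: c_def)
  ultimately show ?thesis unfolding A_ge_def by blast
qed

lemma A_geE:
  assumes "x \<in> A_ge G i"
  obtains F g where "finite F" "\<forall>m\<in>F. g m \<in> G m \<and> i \<le> m" "x = (\<Sum>m\<in>F. g m)"
proof -
  obtain c where c: "hom_family G c" "\<forall>m. m < i \<longrightarrow> c m = 0" "x = (\<Sum>m\<in>{m. c m \<noteq> 0}. c m)"
    using assms unfolding A_ge_def by blast
  show ?thesis
    by (rule that[of "{m. c m \<noteq> 0}" c]) (use c in \<open>auto simp: hom_family_def not_less[symmetric]\<close>)
qed

lemma G_subset_A_ge: "i \<le> m \<Longrightarrow> G m \<subseteq> A_ge G i"
  using A_geI[of "{m}" "\<lambda>_. _" i] by auto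

lemma A_ge_0: "A_ge G 0 = UNIV"
proof -
  have "x \<in> A_ge G 0" for x
  proof -
    obtain c where "hom_family G c" "x = (\<Sum>m\<in>{m. c m \<noteq> 0}. c m)"
      using graded_algebra unfolding graded_algebra_def by blast
    moreover have "\<forall>m. m < 0 \<longrightarrow> c m = 0"
      using calculation(1) G_negative unfolding hom_family_def by blast
    ultimately show ?thesis unfolding A_ge_def by blast
  qed
  then show ?thesis by blast
qed

lemma A_ge_add:
  assumes "x \<in> A_ge G i" "y \<in> A_ge G i"
  shows "x + y \<in> A_ge G i"
proof -
  obtain F g where F: "finite F" "\<forall>m\<in>F. g m \<in> G m \<and> i \<le> m" "x = (\<Sum>m\<in>F. g m)"
    using assms(1) by (rule A_geE)
  obtain F' g' where F': "finite F'" "\<forall>m\<in>F'. g' m \<in> G m \<and> i \<le> m" "y = (\<Sum>m\<in>F'. g' m)"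
    using assms(2) by (rule A_geE)
  define h where "h m = (if m \<in> F then g m else 0) + (if m \<in> F' then g' m else 0)" for m
  have "x + y = (\<Sum>m\<in>F \<union> F'. h m)"
    using F F' by (simp add: h_def sum.distrib sum.If_cases Int_absorb1 Int_absorb2)
  also have "\<dots> \<in> A_ge G i"
    by (rule A_geI) (use F F' in \<open>auto simp: h_def zero_in_G add_in_G\<close>)
  finally show ?thesis .
qed

lemma A_ge_sum: "finite F \<Longrightarrow> (\<And>k. k \<in> F \<Longrightarrow> h k \<in> A_ge G i) \<Longrightarrow> sum h F \<in> A_ge G i"
  by (induction F rule: finite_induct) (use A_geI[of "{}"] A_ge_add in auto)

lemma A_ge_scale:
  assumes "x \<in> A_ge G i"
  shows "scale c x \<in> A_ge G i"
proof -
  obtain F g where F: "finite F" "\<forall>m\<in>F. g m \<in> G m \<and> i \<le> m" "x = (\<Sum>m\<in>F. g m)"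
    using assms by (rule A_geE)
  have "scale c x = (\<Sum>m\<in>F. scale c (g m))" using F(3) scale_sum_right by simp
  also have "\<dots> \<in> A_ge G i" by (rule A_geI) (use F scale_in_G in auto)
  finally show ?thesis .
qed

lemma A_ge_mult_homogeneous:
  assumes "x \<in> A_ge G i" "a \<in> G d"
  shows "x * a \<in> A_ge G (i + d)"
proof -
  obtain F g where F: "finite F" "\<forall>m\<in>F. g m \<in> G m \<and> i \<le> m" "x = (\<Sum>m\<in>F. g m)"
    using assms(1) by (rule A_geE)
  have "x * a = (\<Sum>m\<in>F. g m * a)" using F(3) by (simp add: sum_distrib_right)
  also have "\<dots> \<in> A_ge G (i + d)"
  proof (rule A_ge_sum[OF F(1)])
    fix m assume m: "m \<in> F"
    then have "g m * a \<in> G (m + d)" using F(2) mult_in_G assms(2) by blast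
    then show "g m * a \<in> A_ge G (i + d)"
      using G_subset_A_ge[of "i + d" "m + d"] F(2) m by auto
  qed
  finally show ?thesis .
qed

lemma A_ge_mult_left:
  assumes "x \<in> A_ge G i"
  shows "b * x \<in> A_ge G i"
proof -
  obtain F g where F: "finite F" "\<forall>m\<in>F. g m \<in> G m \<and> i \<le> m" "x = (\<Sum>m\<in>F. g m)"
    using assms by (rule A_geE)
  have "b \<in> A_ge G 0" using A_ge_0 by blast
  then obtain F' g' where F': "finite F'" "\<forall>m\<in>F'. g' m \<in> G m \<and> 0 \<le> m" "b = (\<Sum>m\<in>F'. g' m)"
    by (rule A_geE)
  have "b * x = (\<Sum>n\<in>F'. \<Sum>m\<in>F. g' n * g m)" using F(3) F'(3) by (simp add: sum_product)
  also have "\<dots> \<in> A_ge G i"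
  proof (intro A_ge_sum[OF F'(1)] A_ge_sum[OF F(1)])
    fix n m assume "n \<in> F'" "m \<in> F"
    then have "g' n \<in> G n" "0 \<le> n" "g m \<in> G m" "i \<le> m" using F(2) F'(2) by auto
    then show "g' n * g m \<in> A_ge G i" using mult_in_G G_subset_A_ge[of i "n + m"] by auto
  qed
  finally show ?thesis .
qed

lemma rmult_in_graded_left_hom:
  assumes "a \<in> G (j - i)"
  shows "rmult G i a \<in> graded_left_hom scale G i j"
proof -
  have "\<forall>x\<in>A_ge G i. x * a \<in> A_ge G j"
    using A_ge_mult_homogeneous[OF _ assms] by force
  moreover have "\<forall>m. \<forall>x\<in>A_ge G i. x \<in> G (i + m) \<longrightarrow> x * a \<in> G (j + m)"
    using mult_in_G[OF _ assms] by (metis add.commute diff_add_cancel add.left_commute)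
  ultimately show ?thesis
    unfolding graded_left_hom_def rmult_def
    using A_ge_add A_ge_scale A_ge_mult_left by (simp add: distrib_right scale_mult_left mult.assoc)
qed

lemma graded_left_hom_sum:
  assumes f: "f \<in> graded_left_hom scale G i j"
    and "finite F" "\<And>k. k \<in> F \<Longrightarrow> h k \<in> A_ge G i"
  shows "f (sum h F) = (\<Sum>k\<in>F. f (h k))"
  using assms(2,3)
proof (induction F rule: finite_induct)
  case empty
  have "0 \<in> A_ge G i" using A_geI[of "{}"] by simp
  then have "f (0 + 0) = f 0 + f 0" using f unfolding graded_left_hom_def by blast
  then show ?case by simp
next
  case (insert k F)
  then have "h k \<in> A_ge G i" "sum h F \<in> A_ge G i" using A_ge_sum[OF insert.hyps(1)] by auto
  then show ?case using f insert by (simp add: graded_left_hom_def)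
qed

lemma graded_left_hom_eq_rmult:
  assumes f: "f \<in> graded_left_hom scale G i j"
    and homogeneous: "\<And>m h. i \<le> m \<Longrightarrow> h \<in> G m \<Longrightarrow> f h = h * a"
  shows "f = rmult G i a"
proof
  fix x
  show "f x = rmult G i a x"
  proof (cases "x \<in> A_ge G i")
    case True
    then obtain F g where F: "finite F" "\<forall>m\<in>F. g m \<in> G m \<and> i \<le> m" "x = (\<Sum>m\<in>F. g m)"
      by (rule A_geE)
    have "f x = (\<Sum>m\<in>F. f (g m))"
      using graded_left_hom_sum[OF f F(1)] F(2,3) G_subset_A_ge by blast
    also have "\<dots> = (\<Sum>m\<in>F. g m * a)" using homogeneous F(2) by (intro sum.cong) auto
    also have "\<dots> = x * a" using F(3) by (simp add: sum_distrib_right)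
    finally show ?thesis using True by (simp add: rmult_def)
  next
    case False
    then show ?thesis using f by (simp add: graded_left_hom_def rmult_def)
  qed
qed

end

locale graded_frobenius_datum = graded_k_algebra scale G
  for scale :: "'k::field \<Rightarrow> 'a::ring_1 \<Rightarrow> 'a" and G +
  fixes l :: int and \<theta> :: "int \<Rightarrow> 'a \<Rightarrow> 'a \<Rightarrow> 'k"
  assumes locally_finite: "locally_finite scale G"
    and \<theta>_bij: "bij_betw (\<theta> m) (G (l + m)) (kdual scale (G (- m)))"
    and \<theta>_add: "b \<in> G (l + m) \<Longrightarrow> b' \<in> G (l + m) \<Longrightarrow> \<theta> m (b + b') = (\<lambda>x. \<theta> m b x + \<theta> m b' x)"
    and \<theta>_scale: "b \<in> G (l + m) \<Longrightarrow> \<theta> m (scale c b) = (\<lambda>x. c * \<theta> m b x)"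
    and \<theta>_mult: "b \<in> G (l + m) \<Longrightarrow> a \<in> G n \<Longrightarrow>
      \<theta> (m + n) (b * a) = (\<lambda>x. if x \<in> G (- (m + n)) then \<theta> m b (a * x) else 0)"
begin

definition frobenius_form :: "'a \<Rightarrow> 'k" where
  "frobenius_form = \<theta> (- l) 1"

lemma frobenius_form_kdual: "frobenius_form \<in> kdual scale (G l)"
  using bij_betw_apply[OF \<theta>_bij[of "- l"]] one_in_G by (simp add: frobenius_form_def)

lemma frobenius_form_add:
    "x \<in> G l \<Longrightarrow> y \<in> G l \<Longrightarrow> frobenius_form (x + y) = frobenius_form x + frobenius_form y"
  and frobenius_form_scale: "x \<in> G l \<Longrightarrow> frobenius_form (scale c x) = c * frobenius_form x"
  using frobenius_form_kdual unfolding kdual_def by blast+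

lemma frobenius_form_diff:
  assumes "x \<in> G l" "y \<in> G l"
  shows "frobenius_form (x - y) = frobenius_form x - frobenius_form y"
  using frobenius_form_add[OF diff_in_G[OF assms] assms(2)] by (simp add: algebra_simps)

lemma \<theta>_eq_frobenius_form:
  assumes "w \<in> G e"
  shows "\<theta> (e - l) w = (\<lambda>x. if x \<in> G (l - e) then frobenius_form (w * x) else 0)"
  unfolding frobenius_form_def using \<theta>_mult[of 1 "- l" w e] one_in_G assms by simp

lemma frobenius_form_nondegenerate:
  assumes "w \<in> G e" "w \<noteq> 0"
  obtains z where "z \<in> G (l - e)" "frobenius_form (z * w) \<noteq> 0"
proof -
  obtain \<psi> where \<psi>: "\<psi> \<in> kdual scale (G e)" "\<psi> w \<noteq> 0"
    using exists_kdual_nonzero[OF vector_space_axioms subspace_G assms] by blast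
  then obtain z where z: "z \<in> G (l - e)" "\<theta> (- e) z = \<psi>"
    using \<theta>_bij[of "- e"] unfolding bij_betw_def by force
  have "\<theta> (- e) z = (\<lambda>x. if x \<in> G e then frobenius_form (z * x) else 0)"
    using \<theta>_eq_frobenius_form[OF z(1)] by simp
  then show ?thesis using that z \<psi>(2) assms(1) by auto
qed

lemma frobenius_form_right_cancel:
  assumes "a \<in> G d" "b \<in> G d"
    and "\<And>y. y \<in> G (l - d) \<Longrightarrow> frobenius_form (y * a) = frobenius_form (y * b)"
  shows "a = b"
proof (rule ccontr)
  assume "a \<noteq> b"
  then obtain y where y: "y \<in> G (l - d)" "frobenius_form (y * (a - b)) \<noteq> 0"
    using frobenius_form_nondegenerate[OF diff_in_G[OF assms(1,2)]] by auto
  have "y * a \<in> G l" "y * b \<in> G l"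
    using mult_in_G[OF y(1) assms(1)] mult_in_G[OF y(1) assms(2)] by simp_all
  then have "frobenius_form (y * (a - b)) = frobenius_form (y * a) - frobenius_form (y * b)"
    using frobenius_form_diff by (simp add: right_diff_distrib)
  then show False using y assms(3) by simp
qed

lemma \<theta>_bij_degree: "bij_betw (\<theta> (d - l)) (G d) (kdual scale (G (l - d)))"
  using \<theta>_bij[of "d - l"] by simp

definition right_functional :: "int \<Rightarrow> 'a \<Rightarrow> 'a \<Rightarrow> 'k" where
  "right_functional d a y = (if y \<in> G (l - d) then frobenius_form (y * a) else 0)"

lemma right_functional_kdual:
  assumes "a \<in> G d"
  shows "right_functional d a \<in> kdual scale (G (l - d))"
proof -
  have "y * a \<in> G l" if "y \<in> G (l - d)" for y
    using mult_in_G[OF that assms] by simp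
  then show ?thesis
    using frobenius_form_add frobenius_form_scale add_in_G scale_in_G
    by (auto simp: kdual_def right_functional_def distrib_right scale_mult_left[symmetric])
qed

text \<open>The Nakayama automorphism of A_d: by \<theta>_eq_frobenius_form, \<theta>_nakayama says
  \<phi>(nakayama d a \<cdot> y) = \<phi>(y \<cdot> a) for y \<in> A_{l-d}.\<close>
definition nakayama :: "int \<Rightarrow> 'a \<Rightarrow> 'a" where
  "nakayama d a = inv_into (G d) (\<theta> (d - l)) (right_functional d a)"

lemma nakayama_in_G: "a \<in> G d \<Longrightarrow> nakayama d a \<in> G d"
  and \<theta>_nakayama: "a \<in> G d \<Longrightarrow> \<theta> (d - l) (nakayama d a) = right_functional d a"
  using right_functional_kdual \<theta>_bij_degree unfolding nakayama_def bij_betw_def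
  by (auto intro: inv_into_into f_inv_into_f)

lemma nakayama_add:
  assumes "x \<in> G d" "y \<in> G d"
  shows "nakayama d (x + y) = nakayama d x + nakayama d y"
proof -
  have xy: "y' * x \<in> G l" "y' * y \<in> G l" if "y' \<in> G (l - d)" for y'
    using mult_in_G[OF that assms(1)] mult_in_G[OF that assms(2)] by simp_all
  have "\<theta> (d - l) (nakayama d x + nakayama d y) = (\<lambda>z. right_functional d x z + right_functional d y z)"
    using \<theta>_add[of "nakayama d x" "d - l"] nakayama_in_G \<theta>_nakayama assms by simp
  also have "\<dots> = right_functional d (x + y)"
    using xy frobenius_form_add by (auto simp: right_functional_def distrib_left)
  also have "\<dots> = \<theta> (d - l) (nakayama d (x + y))" using \<theta>_nakayama add_in_G[OF assms] by simp
  finally show ?thesis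
    using inj_onD[OF bij_betw_imp_inj_on[OF \<theta>_bij_degree]] nakayama_in_G assms add_in_G by metis
qed

lemma nakayama_scale:
  assumes "x \<in> G d"
  shows "nakayama d (scale c x) = scale c (nakayama d x)"
proof -
  have mult_in_G_l: "y * x \<in> G l" if "y \<in> G (l - d)" for y
    using mult_in_G[OF that assms] by simp
  have "\<theta> (d - l) (scale c (nakayama d x)) = (\<lambda>z. c * right_functional d x z)"
    using \<theta>_scale[of "nakayama d x" "d - l"] nakayama_in_G \<theta>_nakayama assms by simp
  also have "\<dots> = right_functional d (scale c x)"
    using mult_in_G_l frobenius_form_scale
    by (auto simp: right_functional_def scale_mult_right[symmetric])
  also have "\<dots> = \<theta> (d - l) (nakayama d (scale c x))" using \<theta>_nakayama scale_in_G[OF assms] by simp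
  finally show ?thesis
    using inj_onD[OF bij_betw_imp_inj_on[OF \<theta>_bij_degree]] nakayama_in_G assms scale_in_G by metis
qed

lemma inj_on_nakayama: "inj_on (nakayama d) (G d)"
proof (rule inj_onI)
  fix a b assume ab: "a \<in> G d" "b \<in> G d" "nakayama d a = nakayama d b"
  then have "right_functional d a = right_functional d b" using \<theta>_nakayama by metis
  then show "a = b"
    using frobenius_form_right_cancel[OF ab(1,2)] by (metis right_functional_def)
qed

lemma nakayama_image: "nakayama d ` G d = G d"
proof -
  obtain B where B: "finite B" "span B = G d"
    using locally_finite unfolding locally_finite_def by blast
  have "nakayama d ` G d \<subseteq> G d" using nakayama_in_G by blast
  from inj_on_endomorphism_imp_surj_on[OF B _ _ this inj_on_nakayama]
  show ?thesis using nakayama_add nakayama_scale by blast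
qed

lemma frobenius_form_right_representation:
  assumes "\<psi> \<in> kdual scale (G (l - d))"
  shows "\<exists>a\<in>G d. \<forall>y\<in>G (l - d). frobenius_form (y * a) = \<psi> y"
proof -
  obtain b where b: "b \<in> G d" "\<theta> (d - l) b = \<psi>"
    using assms \<theta>_bij_degree unfolding bij_betw_def by (metis imageE)
  obtain a where a: "a \<in> G d" "nakayama d a = b"
    using b(1) nakayama_image by (metis imageE)
  have "right_functional d a = \<psi>" using \<theta>_nakayama[OF a(1)] a(2) b(2) by simp
  then have "frobenius_form (y * a) = \<psi> y" if "y \<in> G (l - d)" for y
    using fun_cong[of _ _ y] that by (fastforce simp: right_functional_def)
  then show ?thesis using a(1) by blast
qed

lemma inj_on_rmult:
  assumes "j \<le> l"
  shows "inj_on (rmult G i) (G (j - i))"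
proof (rule inj_onI)
  fix a b assume ab: "a \<in> G (j - i)" "b \<in> G (j - i)" "rmult G i a = rmult G i b"
  have "y * a = y * b" if "y \<in> G (l - (j - i))" for y
    using fun_cong[OF ab(3), of y] G_subset_A_ge[of i "l - (j - i)"] that assms
    by (auto simp: rmult_def)
  then show "a = b" using frobenius_form_right_cancel[OF ab(1,2)] by metis
qed

lemma graded_left_hom_is_rmult:
  assumes "j \<le> l" and f: "f \<in> graded_left_hom scale G i j"
  obtains a where "a \<in> G (j - i)" "f = rmult G i a"
proof -
  define d where "d = j - i"
  have f_add: "f (x + y) = f x + f y" if "x \<in> A_ge G i" "y \<in> A_ge G i" for x y
    using f that unfolding graded_left_hom_def by blast
  have f_scale: "f (scale c x) = scale c (f x)" if "x \<in> A_ge G i" for c x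
    using f that unfolding graded_left_hom_def by blast
  have f_mult: "f (b * x) = b * f x" if "x \<in> A_ge G i" for b x
    using f that unfolding graded_left_hom_def by blast
  have f_degree: "f x \<in> G (m + d)" if "x \<in> G m" "i \<le> m" for x m
  proof -
    have "x \<in> A_ge G i" "x \<in> G (i + (m - i))" using that G_subset_A_ge by auto
    then have "f x \<in> G (j + (m - i))" using f unfolding graded_left_hom_def by blast
    then show ?thesis by (simp add: d_def algebra_simps)
  qed
  have low_degree: "i \<le> l - d" using assms(1) by (simp add: d_def)
  define \<psi> where "\<psi> y = (if y \<in> G (l - d) then frobenius_form (f y) else 0)" for y
  have "\<psi> \<in> kdual scale (G (l - d))"
    using f_add f_scale f_degree[OF _ low_degree] G_subset_A_ge[OF low_degree]
      frobenius_form_add frobenius_form_scale add_in_G scale_in_G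
    by (auto simp: kdual_def \<psi>_def subset_iff)
  then obtain a where a: "a \<in> G d" "\<And>y. y \<in> G (l - d) \<Longrightarrow> frobenius_form (y * a) = \<psi> y"
    using frobenius_form_right_representation by blast
  have "f h = h * a" if h: "i \<le> m" "h \<in> G m" for m h
  proof (rule ccontr)
    assume "f h \<noteq> h * a"
    then have "f h - h * a \<noteq> 0" by simp
    moreover have "f h - h * a \<in> G (m + d)"
      using f_degree[OF h(2,1)] mult_in_G[OF h(2) a(1)] diff_in_G by blast
    ultimately obtain z where z: "z \<in> G (l - (m + d))" "frobenius_form (z * (f h - h * a)) \<noteq> 0"
      using frobenius_form_nondegenerate by blast
    have zh: "z * h \<in> G (l - d)" using mult_in_G[OF z(1) h(2)] by simp
    have "z * (f h - h * a) = f (z * h) - (z * h) * a"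
      using f_mult[of h z] G_subset_A_ge[OF h(1)] h(2) by (auto simp: right_diff_distrib mult.assoc)
    moreover have "f (z * h) \<in> G l" "(z * h) * a \<in> G l"
      using f_degree[OF zh low_degree] mult_in_G[OF zh a(1)] by simp_all
    ultimately show False
      using z(2) a(2)[OF zh] frobenius_form_diff by (simp add: \<psi>_def zh)
  qed
  then show ?thesis using that a(1) graded_left_hom_eq_rmult[OF f] unfolding d_def by blast
qed

end

lemma graded_frobenius_datum_exists:
  assumes "graded_frobenius scale G l"
  obtains \<theta> where "graded_frobenius_datum scale G l \<theta>"
proof -
  obtain \<theta> where \<theta>:
    "\<forall>m. bij_betw (\<theta> m) (G (l + m)) (kdual scale (G (- m)))"
    "\<forall>m. \<forall>b\<in>G (l + m). \<forall>b'\<in>G (l + m). \<theta> m (b + b') = (\<lambda>x. \<theta> m b x + \<theta> m b' x)"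
    "\<forall>m c. \<forall>b\<in>G (l + m). \<theta> m (scale c b) = (\<lambda>x. c * \<theta> m b x)"
    "\<forall>m n. \<forall>b\<in>G (l + m). \<forall>a\<in>G n.
       \<theta> (m + n) (b * a) = (\<lambda>x. if x \<in> G (- (m + n)) then \<theta> m b (a * x) else 0)"
    using assms unfolding graded_frobenius_def by blast
  have "graded_frobenius_datum scale G l \<theta>"
    using assms \<theta> unfolding graded_frobenius_def
    by unfold_locales simp_all
  then show ?thesis by (rule that)
qed

theorem lemma4p14:
  fixes scale :: "'k::field \<Rightarrow> 'a::ring_1 \<Rightarrow> 'a"
    and G :: "int \<Rightarrow> 'a set"
    and l i j :: int
  assumes "alg_closed TYPE('k)"
    and "graded_frobenius scale G l"
    and "0 \<le> i" and "i \<le> l" and "0 \<le> j" and "j \<le> l"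
  shows "bij_betw (rmult G i) (G (j - i)) (graded_left_hom scale G i j)
         \<and> (\<forall>a\<in>G (j - i). \<forall>b\<in>G (j - i). rmult G i (a + b) = (\<lambda>x. rmult G i a x + rmult G i b x))
         \<and> (\<forall>c. \<forall>a\<in>G (j - i). rmult G i (scale c a) = (\<lambda>x. scale c (rmult G i a x)))"
proof -
  obtain \<theta> where "graded_frobenius_datum scale G l \<theta>"
    using assms(2) by (rule graded_frobenius_datum_exists)
  then interpret graded_frobenius_datum scale G l \<theta> .
  have "rmult G i ` G (j - i) = graded_left_hom scale G i j"
    using rmult_in_graded_left_hom graded_left_hom_is_rmult[OF assms(6)] by blast
  then have "bij_betw (rmult G i) (G (j - i)) (graded_left_hom scale G i j)"
    using inj_on_rmult[OF assms(6)] by (simp add: bij_betw_def)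
  moreover have "\<forall>a\<in>G (j - i). \<forall>b\<in>G (j - i). rmult G i (a + b) = (\<lambda>x. rmult G i a x + rmult G i b x)"
    by (auto simp: rmult_def distrib_left)
  moreover have "\<forall>c. \<forall>a\<in>G (j - i). rmult G i (scale c a) = (\<lambda>x. scale c (rmult G i a x))"
    by (auto simp: rmult_def scale_mult_right)
  ultimately show ?thesis by blast
qed

end
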